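(* Let $k > 1$ be an integer and let $p > 2k+1$ be a prime such that $p$ divides $\mathrm{num}\!\left(\frac{2^{2k}(2^{2k-1}-1)}{(2k)!}B_k\right)$. Then $p$ divides $t_k = a_k\, 2^{2k-2}(2^{2k-1}-1)\,\mathrm{num}\!\left(\frac{B_k}{4k}\right)$, where $a_k = 1$ if $k$ is even and $a_k = 2$ if $k$ is odd.
   Context: $B_k$ denotes the $k$-th Bernoulli number in the convention of Hirzebruch and Milnor–Kervaire ($B_1 = 1/6$, $B_2 = 1/30$, $B_3 = 1/42, \dots$; i.e. $B_k = |b_{2k}|$ where $t/(e^t-1)=\sum b_m t^m/m!$). For a rational number $a/b$, $\mathrm{num}(a/b)$ denotes the numerator of $a/b$ written in lowest terms. (The integer $t_k$ is the order of the group of homotopy $(4k-1)$-spheres bounding parallelizable manifolds.) *)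

theory Defs
  imports Complex_Main "HOL-Computational_Algebra.Primes"
begin

text \<open>Bernoulli numbers b_m in the convention t/(e^t-1) = sum b_m t^m/m!,
  given by the standard recursion b_0 = 1, sum_{j=0}^{m} C(m+1,j) b_j = 0 for m >= 1.\<close>
fun bern :: "nat \<Rightarrow> rat" where
  "bern n = (if n = 0 then 1
             else - (\<Sum>j<n. of_nat (Suc n choose j) * bern j) / of_nat (Suc n))"

text \<open>Hirzebruch / Milnor--Kervaire convention: B_k = |b_{2k}| (B_1 = 1/6, B_2 = 1/30, ...).\<close>
definition BMK :: "nat \<Rightarrow> rat" where
  "BMK k = \<bar>bern (2 * k)\<bar>"

definition rat_num :: "rat \<Rightarrow> int" where
  "rat_num q = fst (quotient_of q)"

definition a_coef :: "nat \<Rightarrow> int" where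
  "a_coef k = (if even k then 1 else 2)"

definition t_k :: "nat \<Rightarrow> int" where
  "t_k k = a_coef k * 2 ^ (2 * k - 2) * (2 ^ (2 * k - 1) - 1) * rat_num (BMK k / of_nat (4 * k))"

end

theory Submission
  imports Defs
begin

text \<open>The hypothesis gives \<open>p \<mid> 2\<^sup>2\<^sup>k (2\<^sup>2\<^sup>k\<^sup>-\<^sup>1 - 1) num(B\<^sub>k)\<close>, since clearing the
  denominator \<open>(2k)!\<close> can only enlarge the numerator. As \<open>p\<close> is odd, it divides
  \<open>2\<^sup>2\<^sup>k\<^sup>-\<^sup>1 - 1\<close> or \<open>num(B\<^sub>k)\<close>; the former is a factor of \<open>t\<^sub>k\<close>, and in the latter case
  \<open>p\<close> still divides \<open>num(B\<^sub>k/4k)\<close> because \<open>p > 2k + 1\<close> is prime to \<open>4k\<close>.\<close>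

lemma rat_num_of_int_div_dvd:
  fixes a b :: int
  assumes "b \<noteq> 0"
  shows "rat_num (of_int a / of_int b) dvd a"
proof -
  obtain n d where q: "quotient_of (of_int a / of_int b) = (n, d)"
    by (cases "quotient_of (of_int a / of_int b)") auto
  have "d > 0" using quotient_of_denom_pos[OF q] .
  with assms quotient_of_div[OF q] have "(of_int a :: rat) * of_int d = of_int n * of_int b"
    by (simp add: frac_eq_eq)
  then have "n dvd a * d"
    by (metis dvd_triv_left of_int_eq_iff of_int_mult)
  with quotient_of_coprime[OF q] have "n dvd a"
    by (simp add: coprime_dvd_mult_left_iff)
  with q show ?thesis by (simp add: rat_num_def)
qed

lemma rat_num_mult_dvd:
  fixes a b :: int and q :: rat
  assumes "b \<noteq> 0"
  shows "rat_num (of_int a / of_int b * q) dvd a * rat_num q"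
proof -
  obtain n d where q: "quotient_of q = (n, d)" by (cases "quotient_of q") auto
  have "of_int a / of_int b * q = of_int (a * n) / of_int (b * d)"
    using quotient_of_div[OF q] by simp
  moreover have "b * d \<noteq> 0" using assms quotient_of_denom_pos[OF q] by simp
  ultimately show ?thesis
    using rat_num_of_int_div_dvd[of "b * d" "a * n"] q by (simp add: rat_num_def)
qed

lemma rat_num_dvd_rat_num_div:
  fixes m :: int and q :: rat
  assumes "m \<noteq> 0"
  shows "rat_num q dvd rat_num (q / of_int m) * m"
proof -
  obtain n d where q: "quotient_of (q / of_int m) = (n, d)"
    by (cases "quotient_of (q / of_int m)") auto
  have "q = of_int (n * m) / of_int d"
    using quotient_of_div[OF q] assms by (simp add: field_simps)
  then have "rat_num q dvd n * m"
    using rat_num_of_int_div_dvd[of d "n * m"] quotient_of_denom_pos[OF q] by simp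
  with q show ?thesis by (simp add: rat_num_def)
qed

lemma prime_dvd_rat_num_mult:
  fixes p a b :: int and q :: rat
  assumes "prime p" "b \<noteq> 0" "p dvd rat_num (of_int a / of_int b * q)"
  shows "p dvd a \<or> p dvd rat_num q"
  using assms dvd_trans[OF assms(3) rat_num_mult_dvd[OF assms(2)]]
  by (simp add: prime_dvd_mult_iff)

lemma prime_dvd_rat_num_div:
  fixes p m :: int and q :: rat
  assumes "prime p" "m \<noteq> 0" "p dvd rat_num q" "\<not> p dvd m"
  shows "p dvd rat_num (q / of_int m)"
  using assms dvd_trans[OF assms(3) rat_num_dvd_rat_num_div[OF assms(2)]]
  by (simp add: prime_dvd_mult_iff)

lemma prime_not_dvd_power_two:
  fixes p n :: nat
  assumes "prime p" "p > 2"
  shows "\<not> int p dvd 2 ^ n"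
proof
  assume "int p dvd 2 ^ n"
  then have "int p dvd 2" using assms(1) prime_dvd_power[of "int p"] by simp
  then have "p dvd 2" by presburger
  with assms(2) show False using dvd_imp_le[of p 2] by simp
qed

theorem proposition3p13:
  fixes k p :: nat
  assumes "k > 1"
    and "prime p"
    and "p > 2 * k + 1"
    and "int p dvd rat_num (2 ^ (2 * k) * (2 ^ (2 * k - 1) - 1) / fact (2 * k) * BMK k)"
  shows "int p dvd t_k k"
proof -
  have prime_p: "prime (int p)" using assms(2) by simp
  have "int p dvd 2 ^ (2 * k) * (2 ^ (2 * k - 1) - 1) \<or> int p dvd rat_num (BMK k)"
    using prime_dvd_rat_num_mult[OF prime_p, of "fact (2 * k)" "2 ^ (2 * k) * (2 ^ (2 * k - 1) - 1)"]
      assms(4) by simp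
  moreover have "\<not> int p dvd 2 ^ (2 * k)"
    using prime_not_dvd_power_two[OF assms(2)] assms(1,3) by simp
  ultimately consider "int p dvd 2 ^ (2 * k - 1) - 1" | "int p dvd rat_num (BMK k)"
    using prime_p prime_dvd_mult_iff by blast
  then show ?thesis
  proof cases
    case 1
    then show ?thesis unfolding t_k_def by (simp add: mult.assoc)
  next
    case 2
    have "\<not> p dvd 4 * k"
      using assms prime_dvd_mult_nat[of p 4 k] by (auto dest: dvd_imp_le)
    then have "\<not> int p dvd int (4 * k)" by presburger
    then have "int p dvd rat_num (BMK k / of_int (int (4 * k)))"
      using prime_dvd_rat_num_div[OF prime_p _ 2, of "int (4 * k)"] assms(1) by linarith
    then show ?thesis unfolding t_k_def by simp
  qed
qed

end
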